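(* Let $\mathbb{F}_r$ be the free group on $r$ free generators, $r\in\mathbb{N}\cup\{\infty\}$, $r\ge1$. Then: (1) the function $g\mapsto\|g\|_2^2$ is conditionally negative definite on $\mathbb{F}_r$; equivalently, for every $s\in[0,1]$ the function $g\mapsto s^{\|g\|_2^2}$ is positive definite on $\mathbb{F}_r$; (2) the function $g\mapsto(-1)^{\|g\|_2^2}$ is positive definite on $\mathbb{F}_r$. Consequently, for every $s\in[-1,1]$ the function $g\mapsto s^{\|g\|_2^2}$ (with the convention $0^0=1$) is positive definite on $\mathbb{F}_r$.
   Context: Every $g\ne e$ in $\mathbb{F}_r$ has a unique reduced form $g = a_1^{k_1}\cdots a_n^{k_n}$ with $a_j$ free generators, $a_j\neq a_{j+1}$, $k_j\in\mathbb{Z}\setminus\{0\}$; $\|g\|_2^2 := \sum_{j=1}^n k_j^2$ and $\|e\|_2=0$. A function $\varphi$ on a group is positive definite if $\sum_{j,k=1}^n c_j\overline{c_k}\varphi(x_j^{-1}x_k)\ge0$ for all $n$, $x_i$ in the group, $c_i\in\mathbb{C}$; a function $\psi$ is conditionally negative definite if $\psi(g^{-1})=\overline{\psi(g)}$ and $\sum_{j,k} c_j\overline{c_k}\psi(x_j^{-1}x_k)\le0$ whenever $\sum_j c_j=0$. *)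

theory Defs
  imports Complex_Main "HOL-Library.Complex_Order" "HOL-Library.Countable"
begin

text \<open>Elements of the free group on generators of type 'a are represented by their
reduced words a_1^k_1 ... a_n^k_n, encoded as lists of pairs (a_j, k_j) with
k_j nonzero and consecutive generators distinct.\<close>

type_synonym 'a fg = "('a \<times> int) list"

fun fg_reduced :: "'a fg \<Rightarrow> bool" where
  "fg_reduced [] = True"
| "fg_reduced [(a, k)] = (k \<noteq> 0)"
| "fg_reduced ((a, k) # (b, m) # w) = (k \<noteq> 0 \<and> a \<noteq> b \<and> fg_reduced ((b, m) # w))"

fun fg_cons :: "'a \<times> int \<Rightarrow> 'a fg \<Rightarrow> 'a fg" where
  "fg_cons (a, k) [] = (if k = 0 then [] else [(a, k)])"
| "fg_cons (a, k) ((b, m) # w) =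
     (if k = 0 then (b, m) # w
      else if a = b then (if k + m = 0 then w else (a, k + m) # w)
      else (a, k) # (b, m) # w)"

definition fg_mult :: "'a fg \<Rightarrow> 'a fg \<Rightarrow> 'a fg" where
  "fg_mult u v = foldr fg_cons u v"

definition fg_inv :: "'a fg \<Rightarrow> 'a fg" where
  "fg_inv u = rev (map (\<lambda>(a, k). (a, - k)) u)"

definition fg_norm2 :: "'a fg \<Rightarrow> nat" where
  "fg_norm2 u = sum_list (map (\<lambda>(a, k). nat (k ^ 2)) u)"

definition fg_pos_def :: "('a fg \<Rightarrow> complex) \<Rightarrow> bool" where
  "fg_pos_def \<phi> \<longleftrightarrow>
     (\<forall>(n::nat) (x::nat \<Rightarrow> 'a fg) (c::nat \<Rightarrow> complex).
        (\<forall>i<n. fg_reduced (x i)) \<longrightarrow>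
        0 \<le> (\<Sum>j<n. \<Sum>k<n. c j * cnj (c k) * \<phi> (fg_mult (fg_inv (x j)) (x k))))"

definition fg_cond_neg_def :: "('a fg \<Rightarrow> complex) \<Rightarrow> bool" where
  "fg_cond_neg_def \<psi> \<longleftrightarrow>
     (\<forall>g. fg_reduced g \<longrightarrow> \<psi> (fg_inv g) = cnj (\<psi> g)) \<and>
     (\<forall>(n::nat) (x::nat \<Rightarrow> 'a fg) (c::nat \<Rightarrow> complex).
        (\<forall>i<n. fg_reduced (x i)) \<longrightarrow> (\<Sum>j<n. c j) = 0 \<longrightarrow>
        (\<Sum>j<n. \<Sum>k<n. c j * cnj (c k) * \<psi> (fg_mult (fg_inv (x j)) (x k))) \<le> 0)"

end

theory Submission
  imports Defs
begin

text \<open>Cancelling the common prefix of two reduced words x, y in x\<inverse>y gives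
  ||x\<inverse>y||^2 = ||x||^2 + ||y||^2 - 2 <x, y>, where the overlap <x, y> sums k^2 over the common
  syllables and adds k m if the first differing syllables are a^k and a^m with the same generator.
  The overlap is a Gram kernel: it is the inner product of the integer vectors whose coordinate at
  (p, a) is the exponent of the syllable with generator a following the prefix p. Hence ||.||^2 is
  conditionally negative definite, and for 0 < s \<le> 1 the kernel s^||x\<inverse>y||^2 equals
  s^||x||^2 exp (-2 ln s <x, y>) s^||y||^2, which is positive definite by the Schur product theorem
  applied to the exponential series; s = 0 is the limit s \<rightarrow> 0+. Finally ||x\<inverse>y||^2 and
  ||x||^2 + ||y||^2 have the same parity, so (-1)^||x\<inverse>y||^2 is the congruence of a kernel by the
  signs (-1)^||x||^2, which reduces negative s to |s|.\<close>

section \<open>Positive semidefinite kernels\<close>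

definition kernel_form :: "nat \<Rightarrow> (nat \<Rightarrow> nat \<Rightarrow> real) \<Rightarrow> (nat \<Rightarrow> complex) \<Rightarrow> complex" where
  "kernel_form n K c = (\<Sum>j<n. \<Sum>k<n. c j * cnj (c k) * complex_of_real (K j k))"

definition psd_kernel :: "nat \<Rightarrow> (nat \<Rightarrow> nat \<Rightarrow> real) \<Rightarrow> bool" where
  "psd_kernel n K \<longleftrightarrow> (\<forall>c. 0 \<le> kernel_form n K c)"

definition gram_kernel :: "'f set \<Rightarrow> ('f \<Rightarrow> nat \<Rightarrow> real) \<Rightarrow> nat \<Rightarrow> nat \<Rightarrow> real" where
  "gram_kernel F v j k = (\<Sum>f\<in>F. v f j * v f k)"

lemma kernel_form_cong:
  "(\<And>j k. j < n \<Longrightarrow> k < n \<Longrightarrow> K j k = L j k) \<Longrightarrow> kernel_form n K c = kernel_form n L c"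
  unfolding kernel_form_def by (intro sum.cong refl) auto

lemma psd_kernel_cong:
  "(\<And>j k. j < n \<Longrightarrow> k < n \<Longrightarrow> K j k = L j k) \<Longrightarrow> psd_kernel n K \<Longrightarrow> psd_kernel n L"
  unfolding psd_kernel_def using kernel_form_cong by metis

lemma kernel_form_add:
  "kernel_form n (\<lambda>j k. K j k + L j k) c = kernel_form n K c + kernel_form n L c"
  unfolding kernel_form_def by (simp add: algebra_simps sum.distrib)

lemma kernel_form_scaleR:
  "kernel_form n (\<lambda>j k. r * K j k) c = complex_of_real r * kernel_form n K c"
  unfolding kernel_form_def by (simp add: sum_distrib_left algebra_simps)

lemma kernel_form_row_const:
  "kernel_form n (\<lambda>j k. a j) c = (\<Sum>j<n. c j * complex_of_real (a j)) * cnj (\<Sum>k<n. c k)"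
  unfolding kernel_form_def cnj_sum sum_product by (auto intro!: sum.cong simp: mult_ac)

lemma kernel_form_column_const:
  "kernel_form n (\<lambda>j k. a k) c = (\<Sum>j<n. c j) * cnj (\<Sum>k<n. c k * complex_of_real (a k))"
  unfolding kernel_form_def cnj_sum sum_product by (auto intro!: sum.cong simp: mult_ac)

lemma psd_kernel_one: "psd_kernel n (\<lambda>j k. 1)"
  unfolding psd_kernel_def
proof
  fix c :: "nat \<Rightarrow> complex"
  have "kernel_form n (\<lambda>j k. 1) c = complex_of_real ((norm (\<Sum>j<n. c j))\<^sup>2)"
    unfolding kernel_form_def complex_norm_square by (simp add: sum_product)
  then show "0 \<le> kernel_form n (\<lambda>j k. 1) c"
    by (simp add: less_eq_complex_def)
qed

lemma psd_kernel_congruence: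
  assumes "psd_kernel n K"
  shows "psd_kernel n (\<lambda>j k. g j * K j k * g k)"
proof -
  have "kernel_form n (\<lambda>j k. g j * K j k * g k) c = kernel_form n K (\<lambda>j. c j * complex_of_real (g j))"
    for c
    unfolding kernel_form_def by (intro sum.cong refl) (simp add: algebra_simps)
  with assms show ?thesis
    by (simp add: psd_kernel_def)
qed

lemma psd_kernel_sum:
  assumes "\<And>i. i \<in> I \<Longrightarrow> psd_kernel n (K i)"
  shows "psd_kernel n (\<lambda>j k. \<Sum>i\<in>I. K i j k)"
proof -
  have "kernel_form n (\<lambda>j k. \<Sum>i\<in>I. K i j k) c = (\<Sum>i\<in>I. kernel_form n (K i) c)" for c
    unfolding kernel_form_def by (simp add: sum_distrib_left sum.swap[of _ I])
  with assms show ?thesis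
    by (simp add: psd_kernel_def sum_nonneg)
qed

lemma psd_kernel_scaleR: "0 \<le> r \<Longrightarrow> psd_kernel n K \<Longrightarrow> psd_kernel n (\<lambda>j k. r * K j k)"
  unfolding psd_kernel_def kernel_form_scaleR by (simp add: less_eq_complex_def)

lemma psd_kernel_mult_gram:
  assumes "psd_kernel n K"
  shows "psd_kernel n (\<lambda>j k. K j k * gram_kernel F v j k)"
proof -
  have "psd_kernel n (\<lambda>j k. \<Sum>f\<in>F. v f j * K j k * v f k)"
    using assms by (intro psd_kernel_sum psd_kernel_congruence)
  then show ?thesis
    by (simp add: gram_kernel_def sum_distrib_left mult_ac)
qed

lemma psd_kernel_power_gram: "psd_kernel n (\<lambda>j k. gram_kernel F v j k ^ m)"
proof (induction m)
  case 0
  show ?case by (simp add: psd_kernel_one)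
next
  case (Suc m)
  then show ?case
    unfolding power_Suc2 by (rule psd_kernel_mult_gram)
qed

lemma nonneg_complex_limit:
  fixes f :: "'b \<Rightarrow> complex"
  assumes "(f \<longlongrightarrow> z) F" "F \<noteq> bot" "eventually (\<lambda>t. 0 \<le> f t) F"
  shows "0 \<le> z"
proof -
  have "((\<lambda>t. Re (f t)) \<longlongrightarrow> Re z) F" "((\<lambda>t. Im (f t)) \<longlongrightarrow> Im z) F"
    using assms(1) by (auto intro: tendsto_Re tendsto_Im)
  moreover have "eventually (\<lambda>t. 0 \<le> Re (f t)) F" "eventually (\<lambda>t. Im (f t) = 0) F"
    using assms(3) by (auto simp: less_eq_complex_def elim: eventually_mono)
  ultimately have "0 \<le> Re z" "Im z = 0"
    using assms(2) by (auto intro: tendsto_lowerbound tendsto_unique[OF _ _ tendsto_eventually])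
  then show ?thesis
    by (simp add: less_eq_complex_def)
qed

lemma psd_kernel_limit:
  assumes "\<And>j k. ((\<lambda>t. K t j k) \<longlongrightarrow> L j k) F" "F \<noteq> bot"
    "eventually (\<lambda>t. psd_kernel n (K t)) F"
  shows "psd_kernel n L"
  unfolding psd_kernel_def
proof
  fix c
  have "((\<lambda>t. kernel_form n (K t) c) \<longlongrightarrow> kernel_form n L c) F"
    unfolding kernel_form_def by (intro tendsto_intros assms(1))
  moreover have "eventually (\<lambda>t. 0 \<le> kernel_form n (K t) c) F"
    using assms(3) by (auto simp: psd_kernel_def elim: eventually_mono)
  ultimately show "0 \<le> kernel_form n L c"
    using assms(2) nonneg_complex_limit by blast
qed

lemma psd_kernel_exp_gram:
  assumes "0 \<le> r"
  shows "psd_kernel n (\<lambda>j k. exp (r * gram_kernel F v j k))"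
proof -
  define T where "T N j k = (\<Sum>m<N. (r ^ m / fact m) * gram_kernel F v j k ^ m)" for N j k
  show ?thesis
  proof (rule psd_kernel_limit[where K = T and F = sequentially])
    show "(\<lambda>N. T N j k) \<longlonglongrightarrow> exp (r * gram_kernel F v j k)" for j k
      using exp_converges[of "r * gram_kernel F v j k"]
      by (simp add: T_def sums_def power_mult_distrib divide_inverse mult_ac)
    have "psd_kernel n (T N)" for N
      unfolding T_def
      by (rule psd_kernel_sum, rule psd_kernel_scaleR[OF _ psd_kernel_power_gram]) (use assms in simp)
    then show "eventually (\<lambda>N. psd_kernel n (T N)) sequentially"
      by simp
  qed simp
qed

section \<open>Reduced words\<close>

lemma fg_reduced_tl: "fg_reduced (s # w) \<Longrightarrow> fg_reduced w"
  by (cases s; cases w) auto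

lemma fg_reduced_Cons_exp_nonzero: "fg_reduced ((a, k) # w) \<Longrightarrow> k \<noteq> 0"
  by (cases w) auto

lemma fg_cons_reduced: "fg_reduced (s # w) \<Longrightarrow> fg_cons s w = s # w"
  by (cases s; cases w) auto

lemma fg_mult_reduced_append: "fg_reduced (u @ v) \<Longrightarrow> fg_mult u v = u @ v"
proof (induction u)
  case Nil
  then show ?case by (simp add: fg_mult_def)
next
  case (Cons s u)
  then have "fg_mult u v = u @ v"
    using fg_reduced_tl[of s "u @ v"] by simp
  with Cons.prems show ?case
    by (simp add: fg_mult_def fg_cons_reduced)
qed

lemma fg_inv_Cons: "fg_inv ((a, k) # x) = fg_inv x @ [(a, - k)]"
  by (simp add: fg_inv_def)

lemma fg_mult_inv_Cons:
  "fg_mult (fg_inv ((a, k) # x)) y = fg_mult (fg_inv x) (fg_cons (a, - k) y)"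
  by (simp add: fg_inv_Cons fg_mult_def)

lemma fg_reduced_inv_append:
  "fg_reduced ((a, k) # x) \<Longrightarrow> fg_reduced ((a, j) # w) \<Longrightarrow> fg_reduced (fg_inv x @ (a, j) # w)"
proof (induction x arbitrary: a k j w)
  case Nil
  then show ?case by (simp add: fg_inv_def)
next
  case (Cons s x)
  obtain b l where s: "s = (b, l)" by fastforce
  have bx: "fg_reduced ((b, l) # x)"
    using Cons.prems(1) s by simp
  moreover have "fg_reduced ((b, - l) # (a, j) # w)"
    using Cons.prems s fg_reduced_Cons_exp_nonzero[OF bx] by auto
  ultimately show ?case
    using Cons.IH s by (simp add: fg_inv_Cons)
qed

lemma fg_reduced_inv: "fg_reduced x \<Longrightarrow> fg_reduced (fg_inv x)"
proof (cases x)
  case (Cons s x')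
  obtain a k where "s = (a, k)" by fastforce
  moreover assume "fg_reduced x"
  ultimately have "fg_reduced (fg_inv x' @ [(a, - k)])"
    using Cons fg_reduced_inv_append[of a k x' "- k" "[]"] fg_reduced_Cons_exp_nonzero[of a k x'] by simp
  then show ?thesis
    using Cons \<open>s = (a, k)\<close> by (simp add: fg_inv_Cons)
qed (simp add: fg_inv_def)

lemma fg_norm2_Nil [simp]: "fg_norm2 [] = 0"
  by (simp add: fg_norm2_def)

lemma fg_norm2_append: "fg_norm2 (u @ v) = fg_norm2 u + fg_norm2 v"
  by (simp add: fg_norm2_def)

lemma fg_norm2_Cons: "fg_norm2 ((a, k) # v) = nat (k\<^sup>2) + fg_norm2 v"
  by (simp add: fg_norm2_def)

lemma fg_norm2_inv: "fg_norm2 (fg_inv u) = fg_norm2 u"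
  by (simp add: fg_norm2_def fg_inv_def rev_map[symmetric] o_def case_prod_unfold)

section \<open>The overlap of two reduced words\<close>

fun fg_overlap :: "'a fg \<Rightarrow> 'a fg \<Rightarrow> int" where
  "fg_overlap ((a, k) # x) ((b, m) # y) =
     (if (a, k) = (b, m) then k * k + fg_overlap x y else if a = b then k * m else 0)"
| "fg_overlap _ _ = 0"

lemma fg_mult_inv_Cons_distinct:
  assumes "fg_reduced ((a, k) # x)" "fg_reduced ((b, m) # y)" "(a, k) \<noteq> (b, m)"
  shows "fg_mult (fg_inv ((a, k) # x)) ((b, m) # y) = fg_inv x @ fg_cons (a, - k) ((b, m) # y)"
proof -
  have k: "k \<noteq> 0"
    using assms(1) by (rule fg_reduced_Cons_exp_nonzero)
  obtain j w where jw: "fg_cons (a, - k) ((b, m) # y) = (a, j) # w" "fg_reduced ((a, j) # w)"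
  proof (cases "a = b")
    case True
    with assms(3) k have "fg_cons (a, - k) ((b, m) # y) = (a, m - k) # y"
      by simp
    moreover from True assms(2,3) have "fg_reduced ((a, m - k) # y)"
      by (cases y) auto
    ultimately show ?thesis
      by (rule that)
  next
    case False
    with assms(2) k that show ?thesis
      by simp
  qed
  then have "fg_reduced (fg_inv x @ fg_cons (a, - k) ((b, m) # y))"
    using fg_reduced_inv_append[OF assms(1)] by simp
  then show ?thesis
    unfolding fg_mult_inv_Cons by (rule fg_mult_reduced_append)
qed

lemma fg_norm2_inv_mult:
  "fg_reduced x \<Longrightarrow> fg_reduced y \<Longrightarrow>
   int (fg_norm2 (fg_mult (fg_inv x) y)) = int (fg_norm2 x) + int (fg_norm2 y) - 2 * fg_overlap x y"
proof (induction x y rule: fg_overlap.induct)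
  case (1 a k x b m y)
  show ?case
  proof (cases "(a, k) = (b, m)")
    case True
    moreover have "k \<noteq> 0"
      using "1.prems"(1) by (rule fg_reduced_Cons_exp_nonzero)
    moreover have "fg_reduced x" "fg_reduced y"
      using "1.prems" by (auto intro: fg_reduced_tl)
    ultimately show ?thesis
      using "1.IH" by (simp add: fg_mult_inv_Cons fg_norm2_Cons power2_eq_square)
  next
    case False
    then have "int (fg_norm2 (fg_mult (fg_inv ((a, k) # x)) ((b, m) # y)))
        = int (fg_norm2 x) + int (fg_norm2 (fg_cons (a, - k) ((b, m) # y)))"
      using "1.prems" by (simp add: fg_mult_inv_Cons_distinct fg_norm2_append fg_norm2_inv)
    moreover have "2 * k * m \<le> k * k + m * m"
      using zero_le_square[of "k - m"] by (simp add: algebra_simps)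
    ultimately show ?thesis
      using False fg_reduced_Cons_exp_nonzero[OF "1.prems"(1)]
      by (cases "a = b") (auto simp: fg_norm2_Cons power2_eq_square algebra_simps)
  qed
next
  case ("2_1" y)
  then show ?case by (simp add: fg_mult_def fg_inv_def)
next
  case ("2_2" x)
  then show ?case
    using fg_mult_reduced_append[of "fg_inv x" "[]"] fg_reduced_inv[of x] fg_norm2_inv[of x] by simp
qed

lemma fg_overlap_eq_sum_positions:
  "fg_overlap x y = (\<Sum>i < min (length x) (length y).
     if take i x = take i y \<and> fst (x ! i) = fst (y ! i) then snd (x ! i) * snd (y ! i) else 0)"
proof (induction x y rule: fg_overlap.induct)
  case (1 a k x b m y)
  have "(\<Sum>i < min (length ((a, k) # x)) (length ((b, m) # y)).
     if take i ((a, k) # x) = take i ((b, m) # y) \<and> fst (((a, k) # x) ! i) = fst (((b, m) # y) ! i)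
     then snd (((a, k) # x) ! i) * snd (((b, m) # y) ! i) else 0)
    = (if a = b then k * m else 0) + (if (a, k) = (b, m) then (\<Sum>i < min (length x) (length y).
     if take i x = take i y \<and> fst (x ! i) = fst (y ! i) then snd (x ! i) * snd (y ! i) else 0) else 0)"
    by (simp add: sum.lessThan_Suc_shift sum.If_cases del: sum.lessThan_Suc)
  then show ?case
    using "1.IH" by auto
qed simp_all

fun fg_syllable_feature :: "'a fg \<times> 'a \<Rightarrow> 'a fg \<Rightarrow> int" where
  "fg_syllable_feature (p, a) x =
     (let i = length p in if i < length x \<and> take i x = p \<and> fst (x ! i) = a then snd (x ! i) else 0)"

definition fg_features :: "'a fg \<Rightarrow> ('a fg \<times> 'a) set" where
  "fg_features x = (\<lambda>i. (take i x, fst (x ! i))) ` {..<length x}"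

lemma fg_overlap_eq_feature_sum:
  assumes "finite F" "fg_features x \<subseteq> F"
  shows "fg_overlap x y = (\<Sum>f\<in>F. fg_syllable_feature f x * fg_syllable_feature f y)"
proof -
  let ?\<phi> = "fg_syllable_feature"
  have support: "f \<in> fg_features x" if "?\<phi> f x \<noteq> 0" for f
  proof -
    obtain p a where f: "f = (p, a)" by fastforce
    with that have "length p < length x" "f = (take (length p) x, fst (x ! length p))"
      by (auto simp: Let_def split: if_splits)
    then show ?thesis
      unfolding fg_features_def by blast
  qed
  have "(\<Sum>f\<in>F. ?\<phi> f x * ?\<phi> f y) = (\<Sum>f\<in>fg_features x. ?\<phi> f x * ?\<phi> f y)"
    using assms by (rule sum.mono_neutral_right) (metis DiffE mult_eq_0_iff support)
  also have "\<dots> = (\<Sum>i<length x. ?\<phi> (take i x, fst (x ! i)) x * ?\<phi> (take i x, fst (x ! i)) y)"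
    unfolding fg_features_def
  proof (rule sum.reindex_cong[OF _ refl refl])
    show "inj_on (\<lambda>i. (take i x, fst (x ! i))) {..<length x}"
      by (rule inj_onI) (metis length_take lessThan_iff min.absorb2 order.strict_implies_order prod.inject)
  qed
  also have "\<dots> = (\<Sum>i<length x. if i < length y \<and> take i x = take i y \<and> fst (x ! i) = fst (y ! i)
      then snd (x ! i) * snd (y ! i) else 0)"
    by (intro sum.cong refl) (auto simp: Let_def min_absorb2)
  also have "\<dots> = (\<Sum>i < min (length x) (length y).
     if take i x = take i y \<and> fst (x ! i) = fst (y ! i) then snd (x ! i) * snd (y ! i) else 0)"
    by (rule sum.mono_neutral_cong_right) auto
  finally show ?thesis
    by (simp add: fg_overlap_eq_sum_positions)
qed

lemma fg_overlap_eq_gram_kernel: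
  assumes "j < n" "k < n"
  shows "real_of_int (fg_overlap (x j) (x k)) =
    gram_kernel (\<Union>i<n. fg_features (x i)) (\<lambda>f i. of_int (fg_syllable_feature f (x i))) j k"
proof -
  have "fg_overlap (x j) (x k) =
      (\<Sum>f\<in>(\<Union>i<n. fg_features (x i)). fg_syllable_feature f (x j) * fg_syllable_feature f (x k))"
    using assms by (intro fg_overlap_eq_feature_sum) (auto simp: fg_features_def)
  then show ?thesis
    by (simp add: gram_kernel_def)
qed

lemma psd_kernel_fg_overlap: "psd_kernel n (\<lambda>j k. real_of_int (fg_overlap (x j) (x k)))"
  using psd_kernel_mult_gram[OF psd_kernel_one]
  by (rule psd_kernel_cong[rotated]) (simp add: fg_overlap_eq_gram_kernel)

lemma psd_kernel_exp_fg_overlap: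
  assumes "0 \<le> r"
  shows "psd_kernel n (\<lambda>j k. exp (r * real_of_int (fg_overlap (x j) (x k))))"
  using psd_kernel_exp_gram[OF assms, of n "\<Union>i<n. fg_features (x i)"
    "\<lambda>f i. of_int (fg_syllable_feature f (x i))"]
  by (rule psd_kernel_cong[rotated]) (simp add: fg_overlap_eq_gram_kernel)

section \<open>Powers of the squared length\<close>

definition fg_norm2_kernel :: "(nat \<Rightarrow> 'a fg) \<Rightarrow> nat \<Rightarrow> nat \<Rightarrow> nat" where
  "fg_norm2_kernel x j k = fg_norm2 (fg_mult (fg_inv (x j)) (x k))"

lemma fg_norm2_kernel_eq:
  "fg_reduced (x j) \<Longrightarrow> fg_reduced (x k) \<Longrightarrow> real (fg_norm2_kernel x j k) =
     real (fg_norm2 (x j)) + real (fg_norm2 (x k)) - 2 * real_of_int (fg_overlap (x j) (x k))"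
  unfolding fg_norm2_kernel_def
  by (drule (1) fg_norm2_inv_mult, drule arg_cong[where f = real_of_int]) simp

lemma psd_kernel_fg_power_pos:
  assumes "0 < s" "s \<le> 1" "\<forall>i<n. fg_reduced (x i)"
  shows "psd_kernel n (\<lambda>j k. s ^ fg_norm2_kernel x j k)"
proof -
  define l where "l = ln s"
  have "l \<le> 0"
    using assms by (simp add: l_def)
  then have "psd_kernel n (\<lambda>j k. exp (l * fg_norm2 (x j)) * exp ((-2 * l) * of_int (fg_overlap (x j) (x k)))
      * exp (l * fg_norm2 (x k)))"
    by (intro psd_kernel_congruence psd_kernel_exp_fg_overlap) simp
  moreover have "exp (l * fg_norm2 (x j)) * exp ((-2 * l) * of_int (fg_overlap (x j) (x k)))
      * exp (l * fg_norm2 (x k)) = s ^ fg_norm2_kernel x j k"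
    if "j < n" "k < n" for j k
  proof -
    have "exp (l * fg_norm2 (x j)) * exp ((-2 * l) * of_int (fg_overlap (x j) (x k)))
        * exp (l * fg_norm2 (x k))
        = exp (l * fg_norm2 (x j) + (-2 * l) * of_int (fg_overlap (x j) (x k)) + l * fg_norm2 (x k))"
      by (simp only: exp_add)
    also have "\<dots> = exp (real (fg_norm2_kernel x j k) * l)"
      using that assms by (simp add: fg_norm2_kernel_eq algebra_simps)
    also have "\<dots> = s ^ fg_norm2_kernel x j k"
      using assms by (simp add: exp_of_nat_mult l_def)
    finally show ?thesis .
  qed
  ultimately show ?thesis
    by (rule psd_kernel_cong[rotated])
qed

lemma psd_kernel_fg_power_nonneg:
  assumes "0 \<le> s" "s \<le> 1" "\<forall>i<n. fg_reduced (x i)"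
  shows "psd_kernel n (\<lambda>j k. s ^ fg_norm2_kernel x j k)"
proof (cases "s = 0")
  case True
  have "eventually (\<lambda>t. t \<in> {0<..<1}) (at_right (0::real))"
    by (rule eventually_at_right_real) simp
  then have "eventually (\<lambda>t. psd_kernel n (\<lambda>j k. t ^ fg_norm2_kernel x j k)) (at_right 0)"
    by (rule eventually_mono) (metis assms(3) greaterThanLessThan_iff less_imp_le psd_kernel_fg_power_pos)
  then have "psd_kernel n (\<lambda>j k. 0 ^ fg_norm2_kernel x j k)"
    by (rule psd_kernel_limit[rotated 2]) (auto intro!: tendsto_eq_intros)
  with True show ?thesis
    by simp
next
  case False
  with assms show ?thesis
    by (simp add: psd_kernel_fg_power_pos)
qed

lemma psd_kernel_fg_sign_twist:
  assumes "psd_kernel n K" "\<forall>i<n. fg_reduced (x i)"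
  shows "psd_kernel n (\<lambda>j k. (-1) ^ fg_norm2_kernel x j k * K j k)"
proof -
  have "(-1) ^ fg_norm2 (x j) * K j k * (-1) ^ fg_norm2 (x k) = (-1) ^ fg_norm2_kernel x j k * K j k"
    if "j < n" "k < n" for j k
  proof -
    have "int (fg_norm2_kernel x j k) = int (fg_norm2 (x j)) + int (fg_norm2 (x k)) - 2 * fg_overlap (x j) (x k)"
      using that assms(2) by (simp add: fg_norm2_kernel_def fg_norm2_inv_mult)
    then have "even (fg_norm2_kernel x j k) \<longleftrightarrow> even (fg_norm2 (x j) + fg_norm2 (x k))"
      by presburger
    then show ?thesis
      by (simp add: power_add[symmetric] minus_one_power_iff)
  qed
  with psd_kernel_congruence[OF assms(1)] show ?thesis
    by (rule psd_kernel_cong[rotated])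
qed

lemma psd_kernel_fg_power:
  fixes s :: real
  assumes "-1 \<le> s" "s \<le> 1" "\<forall>i<n. fg_reduced (x i)"
  shows "psd_kernel n (\<lambda>j k. s ^ fg_norm2_kernel x j k)"
proof (cases "0 \<le> s")
  case True
  with assms show ?thesis
    by (simp add: psd_kernel_fg_power_nonneg)
next
  case False
  with assms have "psd_kernel n (\<lambda>j k. (-1) ^ fg_norm2_kernel x j k * (-s) ^ fg_norm2_kernel x j k)"
    by (intro psd_kernel_fg_sign_twist psd_kernel_fg_power_nonneg) auto
  then show ?thesis
    by (simp add: power_mult_distrib[symmetric])
qed

lemma fg_pos_def_if_psd_kernel:
  assumes "\<And>n (x :: nat \<Rightarrow> 'a fg). \<forall>i<n. fg_reduced (x i) \<Longrightarrow> psd_kernel n (\<lambda>j k. f (fg_norm2_kernel x j k))"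
  shows "fg_pos_def (\<lambda>g :: 'a fg. complex_of_real (f (fg_norm2 g)))"
  using assms unfolding fg_pos_def_def psd_kernel_def kernel_form_def fg_norm2_kernel_def by blast

lemma fg_cond_neg_def_norm2: "fg_cond_neg_def (\<lambda>g. complex_of_real (real (fg_norm2 g)))"
  unfolding fg_cond_neg_def_def
proof (intro conjI allI impI)
  fix g :: "'a fg"
  show "complex_of_real (real (fg_norm2 (fg_inv g))) = cnj (complex_of_real (real (fg_norm2 g)))"
    by (simp add: fg_norm2_inv)
next
  fix n and x :: "nat \<Rightarrow> 'a fg" and c :: "nat \<Rightarrow> complex"
  assume red: "\<forall>i<n. fg_reduced (x i)" and c: "(\<Sum>j<n. c j) = 0"
  have "(\<Sum>j<n. \<Sum>k<n. c j * cnj (c k) * complex_of_real (real (fg_norm2 (fg_mult (fg_inv (x j)) (x k)))))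
      = kernel_form n (\<lambda>j k. real (fg_norm2 (x j)) + real (fg_norm2 (x k))
          + (-2) * real_of_int (fg_overlap (x j) (x k))) c"
    unfolding kernel_form_def using red
    by (intro sum.cong refl) (simp add: fg_norm2_kernel_eq[unfolded fg_norm2_kernel_def])
  also have "\<dots> = kernel_form n (\<lambda>j k. real (fg_norm2 (x j))) c + kernel_form n (\<lambda>j k. real (fg_norm2 (x k))) c
      + complex_of_real (-2) * kernel_form n (\<lambda>j k. real_of_int (fg_overlap (x j) (x k))) c"
    by (simp only: kernel_form_add kernel_form_scaleR)
  also have "\<dots> = - 2 * kernel_form n (\<lambda>j k. real_of_int (fg_overlap (x j) (x k))) c"
    by (simp add: kernel_form_row_const kernel_form_column_const c)
  also have "\<dots> \<le> 0"
    using psd_kernel_fg_overlap[of n x] by (auto simp: psd_kernel_def less_eq_complex_def)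
  finally show "(\<Sum>j<n. \<Sum>k<n. c j * cnj (c k) *
      complex_of_real (real (fg_norm2 (fg_mult (fg_inv (x j)) (x k)))))  \<le> 0" .
qed

theorem proposition4p2:
  fixes gen :: "'a::countable itself"
  shows "fg_cond_neg_def (\<lambda>g::'a fg. complex_of_real (real (fg_norm2 g)))
    \<and> (\<forall>s::real. 0 \<le> s \<and> s \<le> 1 \<longrightarrow>
          fg_pos_def (\<lambda>g::'a fg. complex_of_real (s ^ fg_norm2 g)))
    \<and> fg_pos_def (\<lambda>g::'a fg. complex_of_real ((-1) ^ fg_norm2 g))
    \<and> (\<forall>s::real. -1 \<le> s \<and> s \<le> 1 \<longrightarrow>
          fg_pos_def (\<lambda>g::'a fg. complex_of_real (s ^ fg_norm2 g)))"
proof -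
  have pos_def: "fg_pos_def (\<lambda>g::'a fg. complex_of_real (s ^ fg_norm2 g))" if "-1 \<le> s" "s \<le> 1" for s :: real
    using fg_pos_def_if_psd_kernel[where f = "\<lambda>N. s ^ N"] psd_kernel_fg_power[OF that] by blast
  show ?thesis
    by (intro conjI allI impI fg_cond_neg_def_norm2 pos_def) auto
qed

end
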